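(* Let $\mathcal{T}$ be an unweighted tree on $L$ vertices with diameter $\mathrm{diam}(\mathcal{T})$, and let $f:\mathbb{N}\to\mathbb{R}$ be an arbitrary function. Then the mask matrix $\mathbf{M} = [f(\mathrm{dist}_{\mathcal{T}}(i,j))]_{i,j=1,\dots,L}$ supports matrix-vector multiplication in time $O(L\cdot\mathrm{diam}(\mathcal{T}))$.
   Context: $\mathrm{dist}_{\mathcal{T}}(i,j)$ is the number of edges on the path between $i$ and $j$; $\mathrm{diam}(\mathcal{T})$ is the maximum of $\mathrm{dist}_{\mathcal{T}}(i,j)$ over all pairs. Values of $f$ are assumed available in $O(1)$ time each; time counts arithmetic operations. *)

theory Defs
  imports Complex_Main
begin

inductive walk :: "(nat \<Rightarrow> nat \<Rightarrow> bool) \<Rightarrow> nat \<Rightarrow> nat \<Rightarrow> nat \<Rightarrow> bool"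
  for E where
  walk_refl: "walk E 0 i i"
| walk_step: "E i k \<Longrightarrow> walk E n k j \<Longrightarrow> walk E (Suc n) i j"

definition is_tree :: "nat \<Rightarrow> (nat \<Rightarrow> nat \<Rightarrow> bool) \<Rightarrow> bool" where
  "is_tree L E \<longleftrightarrow> L \<ge> 1
     \<and> (\<forall>i j. E i j \<longrightarrow> i < L \<and> j < L)
     \<and> (\<forall>i j. E i j \<longrightarrow> E j i)
     \<and> (\<forall>i. \<not> E i i)
     \<and> (\<forall>i<L. \<forall>j<L. \<exists>n. walk E n i j)
     \<and> card {(i, j). E i j \<and> i < j} = L - 1"

text \<open>Number of edges on the (unique) path between i and j = length of a shortest walk.\<close>
definition tdist :: "(nat \<Rightarrow> nat \<Rightarrow> bool) \<Rightarrow> nat \<Rightarrow> nat \<Rightarrow> nat" where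
  "tdist E i j = (LEAST n. walk E n i j)"

definition tdiam :: "nat \<Rightarrow> (nat \<Rightarrow> nat \<Rightarrow> bool) \<Rightarrow> nat" where
  "tdiam L E = Max {tdist E i j | i j. i < L \<and> j < L}"

section \<open>Straight-line arithmetic programs (cost = number of instructions)\<close>

text \<open>LoadX i reads input entry x_i, LoadF k reads the value f(k) (available in O(1)),
  the arithmetic instructions combine earlier registers.\<close>

datatype instr = LoadX nat | LoadF nat | Const real
  | Add nat nat | Sub nat nat | Mul nat nat

fun step :: "(nat \<Rightarrow> real) \<Rightarrow> (nat \<Rightarrow> real) \<Rightarrow> real list \<Rightarrow> instr \<Rightarrow> real list" where
  "step f x rs (LoadX i) = rs @ [x i]"
| "step f x rs (LoadF k) = rs @ [f k]"
| "step f x rs (Const c) = rs @ [c]"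
| "step f x rs (Add a b) = rs @ [rs ! a + rs ! b]"
| "step f x rs (Sub a b) = rs @ [rs ! a - rs ! b]"
| "step f x rs (Mul a b) = rs @ [rs ! a * rs ! b]"

definition exec :: "(nat \<Rightarrow> real) \<Rightarrow> (nat \<Rightarrow> real) \<Rightarrow> instr list \<Rightarrow> real list" where
  "exec f x prog = foldl (step f x) [] prog"

fun instr_ok :: "nat \<Rightarrow> instr \<Rightarrow> bool" where
  "instr_ok n (Add a b) = (a < n \<and> b < n)"
| "instr_ok n (Sub a b) = (a < n \<and> b < n)"
| "instr_ok n (Mul a b) = (a < n \<and> b < n)"
| "instr_ok n _ = True"

definition wf_prog :: "instr list \<Rightarrow> bool" where
  "wf_prog prog \<longleftrightarrow> (\<forall>k<length prog. instr_ok k (prog ! k))"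

end

theory Submission
  imports Defs "HOL-Library.Product_Lexorder"
begin

text \<open>Root the tree at vertex 0 and write C(v, d) for the sum of the x_j over the descendants j
  of v exactly d levels below v, and S(v, d) for the sum over the j at distance d from v.
  Then C(v, 0) = x_v, C(v, d + 1) is the sum of the C(c, d) over the children c of v, and for
  v other than the root
    S(v, d + 1) = C(v, d + 1) + S(parent v, d) - C(v, d - 1)   (C(v, -1) = 0),
  because a vertex outside the subtree of v is one step further from v than from its parent,
  while a descendant of v at depth e is at distance e + 1 from the parent.
  Every vertex has only one parent, so given the C(-, d) all C(-, d + 1) cost L additions.
  Hence all C(v, d) and S(v, d) for d up to the diameter D, followed by
  (M x)_i = sum of f(d) S(i, d) over d \<le> D, form an arithmetic circuit with O(L D) gates,
  and listing its gates so that operands come first yields the straight-line program.\<close>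

lemma walk_snoc: "walk E n i k \<Longrightarrow> E k j \<Longrightarrow> walk E (Suc n) i j"
  by (induction rule: walk.induct) (auto intro: walk.intros)

lemma walk_append: "walk E m i k \<Longrightarrow> walk E n k j \<Longrightarrow> walk E (m + n) i j"
  by (induction rule: walk.induct) (auto intro: walk.intros)

lemma walk_sym:
  assumes "\<And>a b. E a b \<Longrightarrow> E b a" and "walk E n i j"
  shows "walk E n j i"
  using assms(2) by (induction rule: walk.induct) (auto intro: walk.intros walk_snoc assms(1))

lemma walk_0_iff [simp]: "walk E 0 i j \<longleftrightarrow> i = j"
  by (auto intro: walk.intros elim: walk.cases)

lemma walk_Suc_iff: "walk E (Suc n) i j \<longleftrightarrow> (\<exists>k. E i k \<and> walk E n k j)"
  by (auto intro: walk.intros elim: walk.cases)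

lemma tdist_le: "walk E n i j \<Longrightarrow> tdist E i j \<le> n"
  unfolding tdist_def by (rule Least_le)

lemma walk_tdist: "walk E n i j \<Longrightarrow> walk E (tdist E i j) i j"
  unfolding tdist_def by (rule LeastI)

lemma tdist_eq_0_iff: "walk E n i j \<Longrightarrow> tdist E i j = 0 \<longleftrightarrow> i = j"
  using walk_tdist tdist_le[of E 0 i i] by fastforce

lemma tdist_le_tdiam: "i < L \<Longrightarrow> j < L \<Longrightarrow> tdist E i j \<le> tdiam L E"
  unfolding tdiam_def
  by (rule Max_ge) (auto intro: finite_subset[of _ "(\<lambda>(i, j). tdist E i j) ` ({..<L} \<times> {..<L})"])

lemma sum_filter_lessThan:
  fixes n :: nat
  shows "(\<Sum>j | j < n \<and> P j. g j) = (\<Sum>j<n. if P j then g j else 0)"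
  using sum.inter_filter[OF finite_lessThan, where g = g and P = P] by simp

lemma sum_group_by_level:
  fixes f x :: "nat \<Rightarrow> real"
  assumes "\<And>j. j < n \<Longrightarrow> \<delta> j \<le> D"
  shows "(\<Sum>d\<le>D. f d * (\<Sum>j | j < n \<and> \<delta> j = d. x j)) = (\<Sum>j<n. f (\<delta> j) * x j)"
proof -
  have "(\<Sum>d\<le>D. f d * (\<Sum>j | j < n \<and> \<delta> j = d. x j))
      = (\<Sum>d\<le>D. \<Sum>j | j \<in> {..<n} \<and> \<delta> j = d. f (\<delta> j) * x j)"
    by (simp add: sum_distrib_left)
  also have "\<dots> = (\<Sum>j<n. f (\<delta> j) * x j)"
    using assms by (intro sum.group) auto
  finally show ?thesis .
qed

datatype 'k gate = GInput nat | GCoeff nat | GConst real | GAdd 'k 'k | GSub 'k 'k | GMul 'k 'k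

fun gate_args :: "'k gate \<Rightarrow> 'k set" where
  "gate_args (GAdd a b) = {a, b}"
| "gate_args (GSub a b) = {a, b}"
| "gate_args (GMul a b) = {a, b}"
| "gate_args _ = {}"

fun gate_eval :: "(nat \<Rightarrow> real) \<Rightarrow> (nat \<Rightarrow> real) \<Rightarrow> ('k \<Rightarrow> real) \<Rightarrow> 'k gate \<Rightarrow> real" where
  "gate_eval f x val (GInput i) = x i"
| "gate_eval f x val (GCoeff k) = f k"
| "gate_eval f x val (GConst c) = c"
| "gate_eval f x val (GAdd a b) = val a + val b"
| "gate_eval f x val (GSub a b) = val a - val b"
| "gate_eval f x val (GMul a b) = val a * val b"

fun gate_instr :: "('k \<Rightarrow> nat) \<Rightarrow> 'k gate \<Rightarrow> instr" where
  "gate_instr pos (GInput i) = LoadX i"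
| "gate_instr pos (GCoeff k) = LoadF k"
| "gate_instr pos (GConst c) = Const c"
| "gate_instr pos (GAdd a b) = Add (pos a) (pos b)"
| "gate_instr pos (GSub a b) = Sub (pos a) (pos b)"
| "gate_instr pos (GMul a b) = Mul (pos a) (pos b)"

lemma instr_ok_gate_instr: "(\<And>a. a \<in> gate_args G \<Longrightarrow> pos a < n) \<Longrightarrow> instr_ok n (gate_instr pos G)"
  by (cases G) auto

lemma step_gate_instr:
  assumes "\<And>a. a \<in> gate_args G \<Longrightarrow> rs ! pos a = val a"
  shows "step f x rs (gate_instr pos G) = rs @ [gate_eval f x val G]"
  using assms by (cases G) auto

definition compile_gates :: "('k \<Rightarrow> nat) \<Rightarrow> ('k \<Rightarrow> 'k gate) \<Rightarrow> 'k list \<Rightarrow> instr list" where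
  "compile_gates pos g ks = map (gate_instr pos \<circ> g) ks"

definition topologically_sorted :: "('k \<Rightarrow> 'k gate) \<Rightarrow> 'k list \<Rightarrow> bool" where
  "topologically_sorted g ks \<longleftrightarrow> (\<forall>i<length ks. gate_args (g (ks ! i)) \<subseteq> set (take i ks))"

lemma wf_prog_compile_gates:
  assumes "topologically_sorted g ks" and "\<And>i. i < length ks \<Longrightarrow> pos (ks ! i) = i"
  shows "wf_prog (compile_gates pos g ks)"
  unfolding wf_prog_def compile_gates_def
proof (intro allI impI)
  fix i assume i: "i < length (map (gate_instr pos \<circ> g) ks)"
  have "pos a < i" if "a \<in> gate_args (g (ks ! i))" for a
  proof -
    have "a \<in> set (take i ks)" using assms(1) i that by (auto simp: topologically_sorted_def)
    then obtain j where "j < i" "j < length ks" "a = ks ! j" by (auto simp: in_set_conv_nth)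
    then show ?thesis using assms(2) by simp
  qed
  then show "instr_ok i (map (gate_instr pos \<circ> g) ks ! i)"
    using i by (simp add: instr_ok_gate_instr)
qed

lemma exec_compile_gates:
  assumes "topologically_sorted g ks" and "\<And>i. i < length ks \<Longrightarrow> pos (ks ! i) = i"
    and "\<And>k. k \<in> set ks \<Longrightarrow> val k = gate_eval f x val (g k)"
  shows "exec f x (compile_gates pos g ks) = map val ks"
  using assms
proof (induction ks rule: rev_induct)
  case Nil
  show ?case by (simp add: exec_def compile_gates_def)
next
  case (snoc k ks)
  have sorted: "topologically_sorted g ks"
    unfolding topologically_sorted_def
  proof (intro allI impI)
    fix i assume "i < length ks"
    then show "gate_args (g (ks ! i)) \<subseteq> set (take i ks)"
      using snoc.prems(1)[unfolded topologically_sorted_def, rule_format, of i]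
      by (simp add: nth_append)
  qed
  have pos: "pos (ks ! i) = i" if "i < length ks" for i
    using snoc.prems(2)[of i] that by (simp add: nth_append)
  have IH: "exec f x (compile_gates pos g ks) = map val ks"
    using snoc by (simp add: sorted pos)
  have args: "gate_args (g k) \<subseteq> set ks"
    using snoc.prems(1)[unfolded topologically_sorted_def, rule_format, of "length ks"] by simp
  have "map val ks ! pos a = val a" if a: "a \<in> gate_args (g k)" for a
  proof -
    obtain j where "j < length ks" "a = ks ! j"
      using args a by (metis in_set_conv_nth subsetD)
    then show ?thesis using pos by simp
  qed
  then have "step f x (map val ks) (gate_instr pos (g k)) = map val ks @ [val k]"
    using snoc.prems(3)[of k] by (simp add: step_gate_instr)
  then show ?case
    using IH by (simp add: compile_gates_def exec_def)
qed

lemma topologically_sorted_sort_key: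
  assumes "distinct ks"
    and "\<And>k a. k \<in> set ks \<Longrightarrow> a \<in> gate_args (g k) \<Longrightarrow> a \<in> set ks \<and> rank a < rank k"
  shows "topologically_sorted g (sort_key rank ks)"
  unfolding topologically_sorted_def
proof (intro allI impI subsetI)
  let ?ks = "sort_key rank ks"
  fix i a assume i: "i < length ?ks" and a: "a \<in> gate_args (g (?ks ! i))"
  have "?ks ! i \<in> set ks" using nth_mem[OF i] by simp
  from assms(2)[OF this a] have "a \<in> set ?ks" and less: "rank a < rank (?ks ! i)" by simp_all
  then obtain j where j: "j < length ?ks" "a = ?ks ! j" unfolding in_set_conv_nth by blast
  have "j < i"
  proof (rule ccontr)
    assume "\<not> j < i"
    then have "rank (?ks ! i) \<le> rank (?ks ! j)"
      using sorted_nth_mono[OF sorted_sort_key[of rank ks], of i j] j by simp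
    then show False using less j by simp
  qed
  then show "a \<in> set (take i ?ks)" using i j by (auto simp: in_set_conv_nth)
qed

lemma circuit_program:
  fixes g :: "'k \<Rightarrow> 'k gate" and rank :: "'k \<Rightarrow> 'r::linorder"
  assumes "finite K"
    and "\<And>k a. k \<in> K \<Longrightarrow> a \<in> gate_args (g k) \<Longrightarrow> a \<in> K \<and> rank a < rank k"
  obtains prog pos where "wf_prog prog" and "length prog = card K"
    and "\<And>k. k \<in> K \<Longrightarrow> pos k < card K"
    and "\<And>f x val k. (\<And>k. k \<in> K \<Longrightarrow> val k = gate_eval f x val (g k)) \<Longrightarrow> k \<in> K
           \<Longrightarrow> exec f x prog ! pos k = val k"
proof -
  obtain xs where xs: "set xs = K" "distinct xs" using finite_distinct_list[OF assms(1)] by blast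
  define ks where "ks = sort_key rank xs"
  define pos where "pos = inv_into {..<length ks} ((!) ks)"
  have ks: "set ks = K" "distinct ks" "length ks = card K"
    using xs by (auto simp: ks_def distinct_card)
  have sorted: "topologically_sorted g ks"
    unfolding ks_def by (rule topologically_sorted_sort_key) (use xs assms(2) in auto)
  have pos_nth: "pos (ks ! i) = i" if "i < length ks" for i
    unfolding pos_def using that ks(2) by (simp add: inv_into_f_f inj_on_nth)
  have index: "\<exists>i<length ks. k = ks ! i \<and> pos k = i" if "k \<in> K" for k
    using that ks(1) pos_nth by (auto simp: in_set_conv_nth)
  show thesis
  proof
    show "wf_prog (compile_gates pos g ks)" by (rule wf_prog_compile_gates[OF sorted pos_nth])
    show "length (compile_gates pos g ks) = card K" using ks by (simp add: compile_gates_def)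
    show "pos k < card K" if "k \<in> K" for k using index[OF that] ks(3) by auto
    fix f x val k
    assume val: "\<And>k. k \<in> K \<Longrightarrow> val k = gate_eval f x val (g k)" and k: "k \<in> K"
    have "exec f x (compile_gates pos g ks) = map val ks"
      by (rule exec_compile_gates[OF sorted pos_nth]) (use val ks in auto)
    then show "exec f x (compile_gates pos g ks) ! pos k = val k"
      using index[OF k] by auto
  qed
qed

locale tree =
  fixes L :: nat and E :: "nat \<Rightarrow> nat \<Rightarrow> bool"
  assumes is_tree: "is_tree L E"
begin

lemma L_pos: "0 < L"
  using is_tree by (simp add: is_tree_def)

lemma edge_less: "E i j \<Longrightarrow> i < L \<and> j < L"
  using is_tree by (simp add: is_tree_def)

lemma edge_sym: "E i j \<Longrightarrow> E j i"
  using is_tree by (simp add: is_tree_def)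

lemma edge_irrefl: "\<not> E i i"
  using is_tree by (simp add: is_tree_def)

lemma connected: "i < L \<Longrightarrow> j < L \<Longrightarrow> \<exists>n. walk E n i j"
  using is_tree by (simp add: is_tree_def)

lemma card_edges: "card {(i, j). E i j \<and> i < j} = L - 1"
  using is_tree by (simp add: is_tree_def)

lemma walk_tdist_vertices: "i < L \<Longrightarrow> j < L \<Longrightarrow> walk E (tdist E i j) i j"
  using connected walk_tdist by blast

definition depth :: "nat \<Rightarrow> nat" where
  "depth v = tdist E 0 v"

lemma walk_depth: "v < L \<Longrightarrow> walk E (depth v) 0 v"
  unfolding depth_def using L_pos by (simp add: walk_tdist_vertices)

lemma depth_le: "walk E n 0 v \<Longrightarrow> depth v \<le> n"
  unfolding depth_def by (rule tdist_le)

lemma depth_eq_0_iff: "v < L \<Longrightarrow> depth v = 0 \<longleftrightarrow> v = 0"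
  using tdist_eq_0_iff[OF walk_tdist_vertices[of 0 v]] L_pos by (simp add: depth_def)

lemma depth_0 [simp]: "depth 0 = 0"
  using depth_eq_0_iff L_pos by blast

lemma parent_exists:
  assumes "v < L" and "v \<noteq> 0"
  shows "\<exists>u. E v u \<and> Suc (depth u) = depth v"
proof -
  obtain m where m: "depth v = Suc m"
    using assms depth_eq_0_iff by (cases "depth v") auto
  then have "walk E (Suc m) v 0"
    using walk_sym[OF edge_sym walk_depth[OF assms(1)]] by simp
  then obtain u where u: "E v u" "walk E m u 0" by (auto simp: walk_Suc_iff)
  have "depth u \<le> m"
    using depth_le walk_sym[OF edge_sym u(2)] by blast
  moreover have "depth v \<le> Suc (depth u)"
    using depth_le walk_snoc[OF walk_depth edge_sym[OF u(1)]] edge_less[OF u(1)] by blast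
  ultimately show ?thesis using u(1) m by auto
qed

definition parent :: "nat \<Rightarrow> nat" where
  "parent v = (if v = 0 then 0 else SOME u. E v u \<and> Suc (depth u) = depth v)"

lemma parent_0 [simp]: "parent 0 = 0"
  by (simp add: parent_def)

lemma
  assumes "v < L" and "v \<noteq> 0"
  shows edge_parent: "E v (parent v)" and depth_parent: "Suc (depth (parent v)) = depth v"
  using someI_ex[OF parent_exists[OF assms]] assms(2) by (simp_all add: parent_def)

lemma parent_less: "v < L \<Longrightarrow> parent v < L"
  using edge_parent edge_less by (cases "v = 0") (auto simp: L_pos)

lemma min_max_eq_iff:
  fixes a b c d :: "'a::linorder"
  shows "(min a b, max a b) = (min c d, max c d) \<longleftrightarrow> (a = c \<and> b = d) \<or> (a = d \<and> b = c)"
  by (cases "a \<le> b"; cases "c \<le> d") auto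

text \<open>The L - 1 edges from non-root vertices to their parents are distinct, and a tree has
  only L - 1 edges.\<close>
lemma edge_parentE:
  assumes "E a b"
  obtains "a \<noteq> 0" "b = parent a" | "b \<noteq> 0" "a = parent b"
proof -
  define edges where "edges = {(i, j). E i j \<and> i < j}"
  define edge_of where "edge_of v = (min v (parent v), max v (parent v))" for v
  have edge_of: "edge_of v \<in> edges" if "v \<in> {1..<L}" for v
  proof -
    have "E v (parent v)" "E (parent v) v" "v \<noteq> parent v"
      using that edge_parent[of v] edge_sym edge_irrefl by auto
    then show ?thesis by (cases "v < parent v") (auto simp: edges_def edge_of_def)
  qed
  have "inj_on edge_of {1..<L}"
  proof
    fix v w assume v: "v \<in> {1..<L}" and w: "w \<in> {1..<L}" and eq: "edge_of v = edge_of w"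
    show "v = w"
    proof (rule ccontr)
      assume "v \<noteq> w"
      with eq have "v = parent w" "w = parent v"
        unfolding edge_of_def min_max_eq_iff by auto
      then show False using depth_parent[of v] depth_parent[of w] v w by auto
    qed
  qed
  then have "card (edge_of ` {1..<L}) = card edges"
    using card_edges by (simp add: card_image edges_def)
  moreover have "finite edges"
    by (rule finite_subset[of _ "{..<L} \<times> {..<L}"]) (auto simp: edges_def dest: edge_less)
  ultimately have "edge_of ` {1..<L} = edges"
    using edge_of by (intro card_subset_eq) auto
  moreover have "(min a b, max a b) \<in> edges"
    using assms edge_sym edge_irrefl[of a] by (cases "a < b") (auto simp: edges_def min_def max_def)
  ultimately obtain v where "v \<in> {1..<L}" "(min a b, max a b) = edge_of v" by auto
  then have "v \<noteq> 0" "(a = v \<and> b = parent v) \<or> (a = parent v \<and> b = v)"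
    unfolding edge_of_def min_max_eq_iff by auto
  then show thesis using that by blast
qed

definition ancestor :: "nat \<Rightarrow> nat \<Rightarrow> nat" where
  "ancestor n v = (parent ^^ n) v"

lemma ancestor_0 [simp]: "ancestor 0 v = v"
  by (simp add: ancestor_def)

lemma ancestor_Suc: "ancestor (Suc n) v = parent (ancestor n v)"
  by (simp add: ancestor_def)

lemma ancestor_Suc_right: "ancestor (Suc n) v = ancestor n (parent v)"
  by (simp add: ancestor_def funpow_swap1)

lemma ancestor_less: "v < L \<Longrightarrow> ancestor n v < L"
  by (induction n) (simp_all add: ancestor_Suc parent_less)

lemma depth_ancestor: "v < L \<Longrightarrow> depth (ancestor n v) = depth v - n"
proof (induction n)
  case (Suc n)
  then show ?case
    using depth_parent[of "ancestor n v"] ancestor_less[of v n] depth_eq_0_iff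
    by (cases "ancestor n v = 0") (auto simp: ancestor_Suc)
qed simp

lemma ancestor_depth: "v < L \<Longrightarrow> ancestor (depth v) v = 0"
  using depth_ancestor[of v "depth v"] depth_eq_0_iff ancestor_less by simp

lemma walk_ancestor: "v < L \<Longrightarrow> n \<le> depth v \<Longrightarrow> walk E n v (ancestor n v)"
proof (induction n)
  case (Suc n)
  have "depth (ancestor n v) \<noteq> 0"
    using Suc.prems depth_ancestor[of v n] by simp
  then have "ancestor n v \<noteq> 0" by (metis depth_0)
  then have "E (ancestor n v) (ancestor (Suc n) v)"
    using edge_parent ancestor_less[OF Suc.prems(1)] by (simp add: ancestor_Suc)
  then show ?case
    using Suc by (simp add: walk_snoc)
qed simp

lemma tdist_le_via_ancestor:
  assumes "i < L" "j < L" "a \<le> depth i" "b \<le> depth j" "ancestor a i = ancestor b j"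
  shows "tdist E i j \<le> a + b"
proof -
  have "walk E b (ancestor a i) j"
    using walk_sym[OF edge_sym walk_ancestor[OF assms(2,4)]] assms(5) by simp
  then show ?thesis
    using walk_append[OF walk_ancestor[OF assms(1,3)]] tdist_le by blast
qed

lemma walk_common_ancestor:
  "walk E n i j \<Longrightarrow> j < L \<Longrightarrow>
    \<exists>a b. a \<le> depth i \<and> b \<le> depth j \<and> ancestor a i = ancestor b j \<and> a + b \<le> n"
proof (induction rule: walk.induct)
  case (walk_refl i)
  show ?case by (intro exI[of _ 0]) simp
next
  case (walk_step i k n j)
  have i: "i < L" and k: "k < L" using edge_less[OF walk_step.hyps(1)] by auto
  obtain a b where ab: "a \<le> depth k" "b \<le> depth j" "ancestor a k = ancestor b j" "a + b \<le> n"
    using walk_step.IH walk_step.prems by blast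
  from walk_step.hyps(1) show ?case
  proof (cases rule: edge_parentE)
    case 1
    then have "depth i = Suc (depth k)" "ancestor (Suc a) i = ancestor b j"
      using depth_parent[OF i] ab(3) by (simp_all add: ancestor_Suc_right)
    then show ?thesis using ab by (intro exI[of _ "Suc a"] exI[of _ b]) auto
  next
    case 2
    then have depth_k: "depth k = Suc (depth i)"
      using depth_parent[OF k] by simp
    show ?thesis
    proof (cases a)
      case 0
      then have "ancestor (Suc b) j = i" "depth k = depth j - b"
        using ab(3) 2 depth_ancestor[OF walk_step.prems, of b] by (simp_all add: ancestor_Suc)
      then show ?thesis using ab depth_k 0 by (intro exI[of _ 0] exI[of _ "Suc b"]) auto
    next
      case (Suc a')
      then have "ancestor a' i = ancestor b j"
        using ab(3) 2 by (simp add: ancestor_Suc_right)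
      then show ?thesis using ab depth_k Suc by (intro exI[of _ a'] exI[of _ b]) auto
    qed
  qed
qed

lemma tdist_common_ancestor:
  assumes "i < L" "j < L"
  obtains a b where "a \<le> depth i" "b \<le> depth j" "ancestor a i = ancestor b j"
    "a + b \<le> tdist E i j"
  using walk_common_ancestor[OF walk_tdist_vertices[OF assms] assms(2)] by blast

definition below :: "nat \<Rightarrow> nat \<Rightarrow> nat \<Rightarrow> bool" where
  "below v d j \<longleftrightarrow> d \<le> depth j \<and> ancestor d j = v"

lemma below_depth: "j < L \<Longrightarrow> below v d j \<Longrightarrow> depth j = depth v + d"
  unfolding below_def using depth_ancestor[of j d] by auto

lemma below_0_iff [simp]: "below v 0 j \<longleftrightarrow> j = v"
  by (auto simp: below_def)

lemma below_unique:
  assumes "j < L" "below v d j" "below v d' j"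
  shows "d = d'"
  using below_depth[OF assms(1,2)] below_depth[OF assms(1,3)] by simp

lemma below_root_iff: "j < L \<Longrightarrow> below 0 d j \<longleftrightarrow> d = depth j"
  using depth_ancestor[of j d] ancestor_depth[of j] by (auto simp: below_def)

lemma tdist_below:
  assumes "j < L" "below v d j"
  shows "tdist E v j = d"
proof (rule antisym)
  have v: "v < L" using assms ancestor_less by (auto simp: below_def)
  show "tdist E v j \<le> d"
    using tdist_le_via_ancestor[OF v assms(1), of 0 d] assms(2) by (simp add: below_def)
  obtain a b where "a \<le> depth v" "b \<le> depth j" "ancestor a v = ancestor b j" "a + b \<le> tdist E v j"
    using tdist_common_ancestor[OF v assms(1)] .
  moreover have "depth v - a = depth j - b"
    using \<open>ancestor a v = ancestor b j\<close> depth_ancestor v assms(1) by metis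
  ultimately show "d \<le> tdist E v j"
    using below_depth[OF assms] by linarith
qed

lemma below_parent:
  assumes "j < L" "v \<noteq> 0" "below v d j"
  shows "below (parent v) (Suc d) j"
proof -
  have "v < L" using assms ancestor_less by (auto simp: below_def)
  then have "depth v \<noteq> 0" using assms(2) depth_eq_0_iff by simp
  then show ?thesis
    using assms below_depth[OF assms(1,3)] by (auto simp: below_def ancestor_Suc)
qed

lemma tdist_not_below:
  assumes "v < L" "v \<noteq> 0" "j < L" "\<And>d. \<not> below v d j"
  shows "tdist E v j = Suc (tdist E (parent v) j)"
proof (rule antisym)
  have "walk E (Suc (tdist E (parent v) j)) v j"
    using edge_parent[OF assms(1,2)] walk_tdist_vertices[OF parent_less[OF assms(1)] assms(3)]
    by (rule walk_step)
  then show "tdist E v j \<le> Suc (tdist E (parent v) j)" by (rule tdist_le)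
  obtain a b where ab: "a \<le> depth v" "b \<le> depth j" "ancestor a v = ancestor b j"
    "a + b \<le> tdist E v j"
    using tdist_common_ancestor[OF assms(1,3)] .
  show "Suc (tdist E (parent v) j) \<le> tdist E v j"
  proof (cases a)
    case 0
    then have "below v b j" using ab by (simp add: below_def)
    then show ?thesis using assms(4) by blast
  next
    case (Suc a')
    have "depth (parent v) = depth v - 1"
      using depth_parent[OF assms(1,2)] by simp
    then have "tdist E (parent v) j \<le> a' + b"
      using ab Suc parent_less[OF assms(1)] assms(3)
      by (intro tdist_le_via_ancestor) (auto simp: ancestor_Suc_right)
    then show ?thesis using ab(4) Suc by simp
  qed
qed

definition children :: "nat \<Rightarrow> nat set" where
  "children v = {c. c < L \<and> c \<noteq> 0 \<and> parent c = v}"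

lemma finite_children [simp]: "finite (children v)"
  by (simp add: children_def)

lemma sum_card_children: "(\<Sum>v<L. card (children v)) \<le> L"
proof -
  have "(\<Sum>v<L. card (children v)) = card (\<Union>v<L. children v)"
    by (rule card_UN_disjoint[symmetric]) (auto simp: children_def)
  also have "\<dots> \<le> card {..<L}"
    by (rule card_mono) (auto simp: children_def)
  finally show ?thesis by simp
qed

lemma below_Suc_iff:
  assumes "j < L"
  shows "below v (Suc d) j \<longleftrightarrow> (\<exists>c\<in>children v. below c d j)"
proof
  assume below: "below v (Suc d) j"
  have "depth (ancestor d j) \<noteq> 0"
    using below depth_ancestor[OF assms, of d] by (simp add: below_def)
  then have "ancestor d j \<noteq> 0" by (metis depth_0)
  then have "ancestor d j \<in> children v"
    using below ancestor_less[OF assms] by (auto simp: children_def below_def ancestor_Suc)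
  then show "\<exists>c\<in>children v. below c d j"
    using below by (auto simp: below_def)
next
  assume "\<exists>c\<in>children v. below c d j"
  then obtain c where c: "c < L" "c \<noteq> 0" "parent c = v" "below c d j"
    by (auto simp: children_def)
  then have "d < depth j"
    using below_depth[OF assms c(4)] depth_eq_0_iff[OF c(1)] by simp
  then show "below v (Suc d) j"
    using c by (simp add: below_def ancestor_Suc)
qed

definition layer_sum :: "(nat \<Rightarrow> real) \<Rightarrow> nat \<Rightarrow> nat \<Rightarrow> real" where
  "layer_sum x v d = (\<Sum>j | j < L \<and> below v d j. x j)"

definition sphere_sum :: "(nat \<Rightarrow> real) \<Rightarrow> nat \<Rightarrow> nat \<Rightarrow> real" where
  "sphere_sum x v d = (\<Sum>j | j < L \<and> tdist E v j = d. x j)"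

lemma layer_sum_0: "v < L \<Longrightarrow> layer_sum x v 0 = x v"
proof -
  assume "v < L"
  then have "{j. j < L \<and> below v 0 j} = {v}" by auto
  then show ?thesis by (simp add: layer_sum_def)
qed

lemma layer_sum_Suc: "layer_sum x v (Suc d) = (\<Sum>c\<in>children v. layer_sum x c d)"
proof -
  have "{j. j < L \<and> below v (Suc d) j} = (\<Union>c\<in>children v. {j. j < L \<and> below c d j})"
    using below_Suc_iff by auto
  then have "layer_sum x v (Suc d) = sum x (\<Union>c\<in>children v. {j. j < L \<and> below c d j})"
    by (simp add: layer_sum_def)
  also have "\<dots> = (\<Sum>c\<in>children v. sum x {j. j < L \<and> below c d j})"
    by (rule sum.UNION_disjoint) (auto simp: below_def)
  finally show ?thesis by (simp add: layer_sum_def)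
qed

lemma sphere_sum_0: "v < L \<Longrightarrow> sphere_sum x v 0 = x v"
proof -
  assume v: "v < L"
  have "{j. j < L \<and> tdist E v j = 0} = {v}"
    using v tdist_eq_0_iff[OF walk_tdist_vertices[OF v]] by auto
  then show ?thesis by (simp add: sphere_sum_def)
qed

lemma sphere_sum_root: "sphere_sum x 0 d = layer_sum x 0 d"
  unfolding sphere_sum_def layer_sum_def
  by (rule sum.cong) (auto simp: below_root_iff depth_def)

lemma sphere_indicator_Suc:
  assumes "v < L" "v \<noteq> 0" "j < L"
  shows "(if tdist E v j = Suc d then x j else 0) =
    (if below v (Suc d) j then x j else 0) + (if tdist E (parent v) j = d then x j else 0)
      - (if d \<noteq> 0 \<and> below v (d - 1) j then x j else (0::real))"
proof (cases "\<exists>e. below v e j")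
  case True
  then obtain e where e: "below v e j" ..
  have "tdist E v j = e" "tdist E (parent v) j = Suc e"
    using tdist_below[OF assms(3) e] tdist_below[OF assms(3) below_parent[OF assms(3,2) e]] .
  moreover have "below v d' j \<longleftrightarrow> d' = e" for d'
    using below_unique[OF assms(3) _ e] e by blast
  ultimately show ?thesis by (cases d) simp_all
next
  case False
  then show ?thesis using tdist_not_below[OF assms] by simp
qed

lemma sphere_sum_Suc:
  assumes "v < L" "v \<noteq> 0"
  shows "sphere_sum x v (Suc d) = layer_sum x v (Suc d) + sphere_sum x (parent v) d
    - (if d = 0 then 0 else layer_sum x v (d - 1))"
proof -
  have "sphere_sum x v (Suc d) = (\<Sum>j<L. (if below v (Suc d) j then x j else 0)
      + (if tdist E (parent v) j = d then x j else 0)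
      - (if d \<noteq> 0 \<and> below v (d - 1) j then x j else 0))"
    unfolding sphere_sum_def sum_filter_lessThan
    by (rule sum.cong) (simp_all add: sphere_indicator_Suc assms)
  then show ?thesis
    by (simp add: sum.distrib sum_subtractf layer_sum_def sphere_sum_def sum_filter_lessThan)
qed

end

datatype key = KZero | KInput nat | KCoeff nat | KAcc nat nat nat | KOuter nat nat
  | KSphere nat nat | KTerm nat nat | KPartial nat nat

fun key_rank :: "key \<Rightarrow> nat \<times> nat \<times> nat" where
  "key_rank (KAcc d v k) = (1, d, k)"
| "key_rank (KOuter d v) = (2, d, 0)"
| "key_rank (KSphere d v) = (2, d, 1)"
| "key_rank (KTerm i d) = (3, 0, 0)"
| "key_rank (KPartial i d) = (4, d, 0)"
| "key_rank _ = (0, 0, 0)"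

context tree
begin

definition children_list :: "nat \<Rightarrow> nat list" where
  "children_list v = sorted_list_of_set (children v)"

lemma length_children_list [simp]: "length (children_list v) = card (children v)"
  by (simp add: children_list_def)

lemma children_list_nth_less: "k < card (children v) \<Longrightarrow> children_list v ! k < L"
  using nth_mem[of k "children_list v"] by (simp add: children_list_def children_def)

lemma layer_sum_Suc_list:
  "layer_sum x v (Suc d) = sum_list (map (\<lambda>c. layer_sum x c d) (children_list v))"
  by (simp add: layer_sum_Suc children_list_def sum_list_distinct_conv_sum_set)

definition layer_key :: "nat \<Rightarrow> nat \<Rightarrow> key" where
  "layer_key d v = (if d = 0 then KInput v else KAcc (d - 1) v (card (children v)))"

definition sphere_key :: "nat \<Rightarrow> nat \<Rightarrow> key" where
  "sphere_key d v = (if d = 0 then KInput v else KSphere (d - 1) v)"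

fun key_gate :: "key \<Rightarrow> key gate" where
  "key_gate KZero = GConst 0"
| "key_gate (KInput v) = GInput v"
| "key_gate (KCoeff d) = GCoeff d"
| "key_gate (KAcc d v 0) = GConst 0"
| "key_gate (KAcc d v (Suc k)) = GAdd (KAcc d v k) (layer_key d (children_list v ! k))"
| "key_gate (KOuter d v) =
    GAdd (layer_key (Suc d) v) (if v = 0 then KZero else sphere_key d (parent v))"
| "key_gate (KSphere d v) =
    GSub (KOuter d v) (if v = 0 \<or> d = 0 then KZero else layer_key (d - 1) v)"
| "key_gate (KTerm i d) = GMul (KCoeff d) (sphere_key d i)"
| "key_gate (KPartial i d) = GAdd (if d = 0 then KZero else KPartial i (d - 1)) (KTerm i d)"

fun key_value :: "(nat \<Rightarrow> real) \<Rightarrow> (nat \<Rightarrow> real) \<Rightarrow> key \<Rightarrow> real" where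
  "key_value f x KZero = 0"
| "key_value f x (KInput v) = x v"
| "key_value f x (KCoeff d) = f d"
| "key_value f x (KAcc d v k) = sum_list (map (\<lambda>c. layer_sum x c d) (take k (children_list v)))"
| "key_value f x (KOuter d v) =
    layer_sum x v (Suc d) + (if v = 0 then 0 else sphere_sum x (parent v) d)"
| "key_value f x (KSphere d v) = sphere_sum x v (Suc d)"
| "key_value f x (KTerm i d) = f d * sphere_sum x i d"
| "key_value f x (KPartial i d) = (\<Sum>d'\<le>d. f d' * sphere_sum x i d')"

fun valid_key :: "nat \<Rightarrow> key \<Rightarrow> bool" where
  "valid_key D KZero = True"
| "valid_key D (KInput v) = (v < L)"
| "valid_key D (KCoeff d) = (d \<le> D)"
| "valid_key D (KAcc d v k) = (d < D \<and> v < L \<and> k \<le> card (children v))"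
| "valid_key D (KOuter d v) = (d < D \<and> v < L)"
| "valid_key D (KSphere d v) = (d < D \<and> v < L)"
| "valid_key D (KTerm i d) = (i < L \<and> d \<le> D)"
| "valid_key D (KPartial i d) = (i < L \<and> d \<le> D)"

lemma layer_key_value: "v < L \<Longrightarrow> key_value f x (layer_key d v) = layer_sum x v d"
  by (cases d) (simp_all add: layer_key_def layer_sum_0 layer_sum_Suc_list)

lemma sphere_key_value: "v < L \<Longrightarrow> key_value f x (sphere_key d v) = sphere_sum x v d"
  by (cases d) (simp_all add: sphere_key_def sphere_sum_0)

lemma layer_key_valid: "d \<le> D \<Longrightarrow> v < L \<Longrightarrow> valid_key D (layer_key d v)"
  by (auto simp: layer_key_def)

lemma sphere_key_valid: "d \<le> D \<Longrightarrow> v < L \<Longrightarrow> valid_key D (sphere_key d v)"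
  by (auto simp: sphere_key_def)

lemma key_rank_layer_key:
  "key_rank (layer_key d v) < (1, d, k)" "key_rank (layer_key d v) < (2, e, k)"
  by (auto simp: layer_key_def)

lemma key_rank_sphere_key:
  "key_rank (sphere_key d v) < (2, d, k)" "key_rank (sphere_key d v) < (3, e, k)"
  by (auto simp: sphere_key_def)

lemma key_gate_args:
  assumes "valid_key D k" "a \<in> gate_args (key_gate k)"
  shows "valid_key D a \<and> key_rank a < key_rank k"
proof (cases k)
  case (KAcc d v n)
  then show ?thesis
    using assms key_rank_layer_key layer_key_valid[of d D] children_list_nth_less
    by (cases n) auto
next
  case (KOuter d v)
  then show ?thesis
    using assms key_rank_layer_key key_rank_sphere_key
      layer_key_valid[of "Suc d" D] sphere_key_valid[of d D] parent_less
    by (auto split: if_splits)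
next
  case (KSphere d v)
  then show ?thesis
    using assms key_rank_layer_key layer_key_valid[of "d - 1" D]
    by (auto split: if_splits)
next
  case (KTerm i d)
  then show ?thesis
    using assms key_rank_sphere_key sphere_key_valid[of d D] by auto
qed (use assms in \<open>auto split: if_splits\<close>)

lemma key_value_gate:
  assumes "valid_key D k"
  shows "key_value f x k = gate_eval f x (key_value f x) (key_gate k)"
proof (cases k)
  case (KAcc d v n)
  then show ?thesis
    using assms children_list_nth_less
    by (cases n) (simp_all add: layer_key_value take_Suc_conv_app_nth)
next
  case (KOuter d v)
  then show ?thesis
    using assms parent_less by (simp add: layer_key_value sphere_key_value)
next
  case (KSphere d v)
  then show ?thesis
    using assms by (simp add: layer_key_value sphere_key_value sphere_sum_Suc sphere_sum_root)
next
  case (KTerm i d)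
  then show ?thesis
    using assms by (simp add: sphere_key_value)
next
  case (KPartial i d)
  then show ?thesis
    by (cases d) simp_all
qed simp_all

definition keys :: "nat \<Rightarrow> key set" where
  "keys D = {k. valid_key D k}"

lemma keys_subset:
  "keys D \<subseteq> {KZero} \<union> KInput ` {..<L} \<union> KCoeff ` {..D}
    \<union> (\<lambda>(d, v, k). KAcc d v k) ` ({..<D} \<times> (SIGMA v:{..<L}. {..card (children v)}))
    \<union> (\<lambda>(d, v). KOuter d v) ` ({..<D} \<times> {..<L}) \<union> (\<lambda>(d, v). KSphere d v) ` ({..<D} \<times> {..<L})
    \<union> (\<lambda>(i, d). KTerm i d) ` ({..<L} \<times> {..D}) \<union> (\<lambda>(i, d). KPartial i d) ` ({..<L} \<times> {..D})"
    (is "_ \<subseteq> ?families")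
proof
  fix k assume k: "k \<in> keys D"
  then show "k \<in> ?families"
  proof (cases k)
    case (KAcc d v n)
    then have "k \<in> (\<lambda>(d, v, k). KAcc d v k) ` ({..<D} \<times> (SIGMA v:{..<L}. {..card (children v)}))"
      using k by (auto simp: keys_def intro!: image_eqI[of _ _ "(d, v, n)"])
    then show ?thesis by blast
  next
    case (KOuter d v)
    then have "k \<in> (\<lambda>(d, v). KOuter d v) ` ({..<D} \<times> {..<L})"
      using k by (auto simp: keys_def intro!: image_eqI[of _ _ "(d, v)"])
    then show ?thesis by blast
  next
    case (KSphere d v)
    then have "k \<in> (\<lambda>(d, v). KSphere d v) ` ({..<D} \<times> {..<L})"
      using k by (auto simp: keys_def intro!: image_eqI[of _ _ "(d, v)"])
    then show ?thesis by blast
  next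
    case (KTerm i d)
    then have "k \<in> (\<lambda>(i, d). KTerm i d) ` ({..<L} \<times> {..D})"
      using k by (auto simp: keys_def intro!: image_eqI[of _ _ "(i, d)"])
    then show ?thesis by blast
  next
    case (KPartial i d)
    then have "k \<in> (\<lambda>(i, d). KPartial i d) ` ({..<L} \<times> {..D})"
      using k by (auto simp: keys_def intro!: image_eqI[of _ _ "(i, d)"])
    then show ?thesis by blast
  qed (use k in \<open>auto simp: keys_def\<close>)
qed

lemma finite_keys: "finite (keys D)"
  by (rule finite_subset[OF keys_subset]) auto

lemma card_keys: "card (keys D) \<le> 12 * L * max 1 D"
proof -
  have acc: "card ({..<D} \<times> (SIGMA v:{..<L}. {..card (children v)})) \<le> D * (2 * L)"
    using sum_card_children by (simp add: sum_Suc)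
  have "card (keys D) \<le> card {KZero} + card (KInput ` {..<L}) + card (KCoeff ` {..D})
    + card ((\<lambda>(d, v, k). KAcc d v k) ` ({..<D} \<times> (SIGMA v:{..<L}. {..card (children v)})))
    + card ((\<lambda>(d, v). KOuter d v) ` ({..<D} \<times> {..<L}))
    + card ((\<lambda>(d, v). KSphere d v) ` ({..<D} \<times> {..<L}))
    + card ((\<lambda>(i, d). KTerm i d) ` ({..<L} \<times> {..D}))
    + card ((\<lambda>(i, d). KPartial i d) ` ({..<L} \<times> {..D}))"
    by (rule card_mono[OF _ keys_subset, THEN order_trans], simp,
        intro card_Un_le[THEN order_trans] add_mono order_refl)
  also have "\<dots> \<le> 1 + L + Suc D + D * (2 * L) + D * L + D * L + L * Suc D + L * Suc D"
    by (intro add_mono card_image_le[THEN order_trans] acc) auto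
  also have "\<dots> = 2 + 3 * L + D + 6 * (D * L)"
    by (simp add: algebra_simps)
  also have "\<dots> \<le> 12 * (max 1 D * L)"
  proof -
    have M: "max 1 D \<le> max 1 D * L"
      using mult_le_mono2[of 1 L "max 1 D"] L_pos by linarith
    have "D * L \<le> max 1 D * L" "L \<le> max 1 D * L" "D \<le> max 1 D * L" "1 \<le> max 1 D * L"
      using order_trans[OF max.cobounded2 M] order_trans[OF max.cobounded1 M] by simp_all
    then show ?thesis by linarith
  qed
  finally show ?thesis by (simp add: mult.commute mult.left_commute)
qed

lemma sum_weighted_sphere_sums:
  assumes "i < L"
  shows "(\<Sum>d\<le>tdiam L E. f d * sphere_sum x i d) = (\<Sum>j<L. f (tdist E i j) * x j)"
  using sum_group_by_level[of L "tdist E i" "tdiam L E" f x] tdist_le_tdiam[OF assms]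
  by (simp add: sphere_sum_def)

lemma distance_matvec_program:
  obtains prog outs where "wf_prog prog" "length outs = L" "\<forall>r\<in>set outs. r < length prog"
    "length prog \<le> 12 * L * max 1 (tdiam L E)"
    "\<forall>f x. \<forall>i<L. exec f x prog ! (outs ! i) = (\<Sum>j<L. f (tdist E i j) * x j)"
proof -
  let ?D = "tdiam L E"
  have "\<And>k a. k \<in> keys ?D \<Longrightarrow> a \<in> gate_args (key_gate k)
      \<Longrightarrow> a \<in> keys ?D \<and> key_rank a < key_rank k"
    using key_gate_args by (simp add: keys_def)
  then obtain prog pos where prog: "wf_prog prog" "length prog = card (keys ?D)"
    and pos: "\<And>k. k \<in> keys ?D \<Longrightarrow> pos k < card (keys ?D)"
    and exec: "\<And>f x val k. (\<And>k. k \<in> keys ?D \<Longrightarrow> val k = gate_eval f x val (key_gate k))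
      \<Longrightarrow> k \<in> keys ?D \<Longrightarrow> exec f x prog ! pos k = val k"
    using circuit_program[OF finite_keys] by blast
  define outs where "outs = map (\<lambda>i. pos (KPartial i ?D)) [0..<L]"
  have "exec f x prog ! (outs ! i) = (\<Sum>j<L. f (tdist E i j) * x j)" if "i < L" for f x i
  proof -
    have "exec f x prog ! pos (KPartial i ?D) = key_value f x (KPartial i ?D)"
      by (rule exec) (use key_value_gate that in \<open>auto simp: keys_def\<close>)
    then show ?thesis using sum_weighted_sphere_sums[OF that] that by (simp add: outs_def)
  qed
  moreover have "\<forall>r\<in>set outs. r < length prog"
    using pos prog(2) by (auto simp: outs_def keys_def)
  ultimately show thesis
    using that[of prog outs] prog card_keys by (simp add: outs_def)
qed

end

theorem lemma6p2:
  shows "\<exists>C::nat. \<forall>L E. is_tree L E \<longrightarrow>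
           (\<exists>prog outs. wf_prog prog
              \<and> length outs = L \<and> (\<forall>r\<in>set outs. r < length prog)
              \<and> length prog \<le> C * L * max 1 (tdiam L E)
              \<and> (\<forall>(f::nat \<Rightarrow> real) (x::nat \<Rightarrow> real). \<forall>i<L.
                    exec f x prog ! (outs ! i) = (\<Sum>j<L. f (tdist E i j) * x j)))"
proof (intro exI[of _ 12] allI impI)
  fix L E assume "is_tree L E"
  then interpret tree L E by unfold_locales
  show "\<exists>prog outs. wf_prog prog \<and> length outs = L \<and> (\<forall>r\<in>set outs. r < length prog)
      \<and> length prog \<le> 12 * L * max 1 (tdiam L E)
      \<and> (\<forall>f x. \<forall>i<L. exec f x prog ! (outs ! i) = (\<Sum>j<L. f (tdist E i j) * x j))"
    by (rule distance_matvec_program) blast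
qed

end
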